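(* Let $b>2$ be an integer and let $G$ be a $b$-dc-semigroup. \begin{enumerate} \item The set $U_b=\{I_b(i,k): i\in\mathbf{N},\ k\in\mathbf{N}^*\}$, endowed with the operation $I_b(i,k)\cdot I_b(j,l)=I_b(i+j,k+l)$, is an abelian semigroup. \item If $i,j\in\mathbf{N}$, $k,l\in\mathbf{N}^*$, $I_b(i,k)\subseteq G$ and $I_b(j,l)\subseteq G$, then $I_b(i,k)\cdot I_b(j,l)=I_b(i+j,k+l)\subseteq G$. \end{enumerate}
   Context: $\mathbf{N}=\{0,1,2,\dots\}$ and $\mathbf{N}^*=\mathbf{N}\setminus\{0\}$. Fix an integer base $b\ge 2$. A $b$-dc-semigroup is a subsemigroup $G$ of the multiplicative semigroup $(\mathbf{N}^*,\cdot)$ which is closed with respect to the number of digits in base $b$: whenever $x\in G$ has a base-$b$ representation with exactly $n$ digits (leading digit nonzero), every positive integer whose base-$b$ representation has exactly $n$ digits also lies in $G$; equivalently, if $x\in G$ and $b^{n-1}\le x<b^n$ then $\{y\in\mathbf{N}: b^{n-1}\le y<b^n\}\subseteq G$. For $i\in\mathbf{N}$ and $j\in\mathbf{N}^*$, $I_b(i,j)=\{x\in\mathbf{N}: b^i\le x<b^{i+j}\}$ and $I_b(i,+\infty)=\{x\in\mathbf{N}: x\ge b^i\}$. *)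

theory Defs
  imports Main
begin

definition I_b :: "nat \<Rightarrow> nat \<Rightarrow> nat \<Rightarrow> nat set" where
  "I_b b i j = {x. b ^ i \<le> x \<and> x < b ^ (i + j)}"

definition U_b :: "nat \<Rightarrow> nat set set" where
  "U_b b = {I_b b i k | i k. 0 < k}"

text \<open>b-dc-semigroup: multiplicative subsemigroup of the positive integers
  closed with respect to the number of base-b digits.\<close>
definition dc_semigroup :: "nat \<Rightarrow> nat set \<Rightarrow> bool" where
  "dc_semigroup b G \<longleftrightarrow>
     G \<subseteq> {x. 0 < x} \<and>
     (\<forall>x\<in>G. \<forall>y\<in>G. x * y \<in> G) \<and>
     (\<forall>x\<in>G. \<forall>n::nat. 1 \<le> n \<and> b ^ (n - 1) \<le> x \<and> x < b ^ n \<longrightarrow>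
        {y. b ^ (n - 1) \<le> y \<and> y < b ^ n} \<subseteq> G)"

end

theory Submission
  imports Defs
begin

text \<open>Each interval \<open>I_b(i,k)\<close> is the union of the one-digit blocks \<open>I_b(m,1)\<close>,
  \<open>i \<le> m < i + k\<close>, and a dc-semigroup contains a whole block as soon as it meets it.
  So for part 2 it suffices to hit every block of \<open>I_b(i+j,k+l)\<close> by a product
  \<open>x y\<close> with \<open>x \<in> I_b(i,k)\<close>, \<open>y \<in> I_b(j,l)\<close>: powers \<open>b^m\<^sub>1 b^m\<^sub>2\<close> reach the blocks with
  \<open>m \<le> i + j + k + l - 2\<close>, and \<open>(b-1) b^(i+k-1) \<cdot> (b-1) b^(j+l-1)\<close> reaches the top one,
  because \<open>b \<le> (b-1)\<^sup>2 < b\<^sup>2\<close> for \<open>b > 2\<close>.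
  Part 1 holds because \<open>(i,k)\<close> is determined by \<open>I_b(i,k)\<close>.\<close>

lemma I_b_eq_iff:
  assumes "1 < b" and "0 < k" and "0 < l"
  shows "I_b b i k = I_b b j l \<longleftrightarrow> i = j \<and> k = l"
proof
  assume eq: "I_b b i k = I_b b j l"
  have lt1: "b ^ i < b ^ (i + k)" and lt2: "b ^ j < b ^ (j + l)"
    using assms by simp_all
  have "b ^ i \<in> I_b b j l" using lt1 unfolding eq[symmetric] by (simp add: I_b_def)
  moreover have "b ^ j \<in> I_b b i k" using lt2 unfolding eq by (simp add: I_b_def)
  ultimately have "b ^ i = b ^ j" by (simp add: I_b_def)
  then have ij: "i = j" using \<open>1 < b\<close> by simp
  have "b ^ (i + k) - 1 \<in> I_b b j l" using lt1 unfolding eq[symmetric] by (auto simp: I_b_def)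
  moreover have "b ^ (j + l) - 1 \<in> I_b b i k" using lt2 unfolding eq by (auto simp: I_b_def)
  ultimately have "b ^ (i + k) = b ^ (j + l)" using lt1 lt2 by (auto simp: I_b_def)
  with ij \<open>1 < b\<close> show "i = j \<and> k = l" by simp
qed simp

definition interval_mult :: "nat \<Rightarrow> nat set \<Rightarrow> nat set \<Rightarrow> nat set" where
  "interval_mult b A B =
     (THE C. \<exists>i k j l. 0 < k \<and> 0 < l \<and> A = I_b b i k \<and> B = I_b b j l \<and>
                      C = I_b b (i + j) (k + l))"

lemma interval_mult_I_b:
  assumes "1 < b" and "0 < k" and "0 < l"
  shows "interval_mult b (I_b b i k) (I_b b j l) = I_b b (i + j) (k + l)"
  unfolding interval_mult_def
proof (rule the_equality)
  show "\<exists>i' k' j' l'. 0 < k' \<and> 0 < l' \<and> I_b b i k = I_b b i' k' \<and>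
          I_b b j l = I_b b j' l' \<and> I_b b (i + j) (k + l) = I_b b (i' + j') (k' + l')"
    using assms by blast
next
  fix C
  assume "\<exists>i' k' j' l'. 0 < k' \<and> 0 < l' \<and> I_b b i k = I_b b i' k' \<and>
            I_b b j l = I_b b j' l' \<and> C = I_b b (i' + j') (k' + l')"
  then obtain i' k' j' l' where "0 < k'" "0 < l'" "I_b b i k = I_b b i' k'"
      "I_b b j l = I_b b j' l'" "C = I_b b (i' + j') (k' + l')"
    by blast
  with assms show "C = I_b b (i + j) (k + l)" by (simp add: I_b_eq_iff)
qed

lemma mem_U_b_iff: "A \<in> U_b b \<longleftrightarrow> (\<exists>i k. 0 < k \<and> A = I_b b i k)"
  by (auto simp: U_b_def)

lemma interval_mult_closed:
  assumes "1 < b" and "A \<in> U_b b" and "B \<in> U_b b"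
  shows "interval_mult b A B \<in> U_b b"
proof -
  obtain i k j l where "0 < k" "A = I_b b i k" "0 < l" "B = I_b b j l"
    using assms by (auto simp: mem_U_b_iff)
  with \<open>1 < b\<close> show ?thesis by (auto simp: mem_U_b_iff interval_mult_I_b)
qed

lemma interval_mult_assoc:
  assumes "1 < b" and "A \<in> U_b b" and "B \<in> U_b b" and "C \<in> U_b b"
  shows "interval_mult b (interval_mult b A B) C = interval_mult b A (interval_mult b B C)"
proof -
  obtain i k j l m n where "0 < k" "A = I_b b i k" "0 < l" "B = I_b b j l"
    "0 < n" "C = I_b b m n"
    using assms by (auto simp: mem_U_b_iff)
  with \<open>1 < b\<close> show ?thesis by (simp add: interval_mult_I_b add.assoc)
qed

lemma interval_mult_commute:
  assumes "1 < b" and "A \<in> U_b b" and "B \<in> U_b b"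
  shows "interval_mult b A B = interval_mult b B A"
proof -
  obtain i k j l where "0 < k" "A = I_b b i k" "0 < l" "B = I_b b j l"
    using assms by (auto simp: mem_U_b_iff)
  with \<open>1 < b\<close> show ?thesis by (simp add: interval_mult_I_b add.commute)
qed

lemma I_b_Suc:
  assumes "0 < b"
  shows "I_b b i (Suc k) = I_b b i k \<union> I_b b (i + k) 1"
proof -
  have "b ^ i \<le> b ^ (i + k)" using assms by (simp add: power_increasing)
  moreover have "x < b ^ (i + Suc k)" if "x < b ^ (i + k)" for x
    using that assms by (simp add: less_le_trans)
  ultimately show ?thesis by (auto simp: I_b_def)
qed

lemma I_b_eq_UN_blocks:
  assumes "0 < b"
  shows "I_b b i k = (\<Union>m\<in>{i..<i + k}. I_b b m 1)"
proof (induction k)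
  case 0
  then show ?case by (simp add: I_b_def)
next
  case (Suc k)
  have "{i..<i + Suc k} = insert (i + k) {i..<i + k}" by auto
  with Suc.IH show ?case by (simp add: I_b_Suc[OF assms, of i k] Un_commute)
qed

lemma dc_semigroup_mult:
  "dc_semigroup b G \<Longrightarrow> x \<in> G \<Longrightarrow> y \<in> G \<Longrightarrow> x * y \<in> G"
  by (simp add: dc_semigroup_def)

lemma dc_semigroup_block:
  assumes "dc_semigroup b G" and "x \<in> G" and "x \<in> I_b b m 1"
  shows "I_b b m 1 \<subseteq> G"
proof -
  have "{y. b ^ (n - 1) \<le> y \<and> y < b ^ n} \<subseteq> G"
    if "1 \<le> n" "b ^ (n - 1) \<le> x" "x < b ^ n" for n
    using assms(1,2) that unfolding dc_semigroup_def by blast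
  from this[of "Suc m"] assms(3) show ?thesis by (simp add: I_b_def)
qed

lemma power_in_I_b:
  assumes "1 < b" and "i \<le> m" and "m < i + k"
  shows "b ^ m \<in> I_b b i k"
  using assms by (auto simp: I_b_def intro: power_increasing power_strict_increasing)

lemma top_digit_in_I_b:
  assumes "1 < b" and "0 < k"
  shows "(b - 1) * b ^ (i + k - 1) \<in> I_b b i k"
proof -
  have "b ^ i \<le> b ^ (i + k - 1)" using assms by (simp add: power_increasing)
  also have "\<dots> \<le> (b - 1) * b ^ (i + k - 1)" using assms by simp
  finally have lower: "b ^ i \<le> (b - 1) * b ^ (i + k - 1)" .
  have "(b - 1) * b ^ (i + k - 1) < b * b ^ (i + k - 1)" using assms by simp
  also have "\<dots> = b ^ (i + k)" using assms by (simp flip: power_Suc)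
  finally show ?thesis using lower by (simp add: I_b_def)
qed

lemma pred_square_times_power_in_block:
  assumes "2 < b"
  shows "(b - 1) * (b - 1) * b ^ n \<in> I_b b (Suc n) 1"
proof -
  have "b * 1 \<le> (b - 1) * 2" using assms by simp
  also have "\<dots> \<le> (b - 1) * (b - 1)" using assms by (intro mult_le_mono2) simp
  finally have "b * b ^ n \<le> (b - 1) * (b - 1) * b ^ n" by (intro mult_le_mono1) simp
  then have "b ^ Suc n \<le> (b - 1) * (b - 1) * b ^ n" by simp
  moreover have "(b - 1) * (b - 1) < b * b" using assms by (intro mult_strict_mono) auto
  then have "(b - 1) * (b - 1) * b ^ n < b ^ (Suc n + 1)" using assms by simp
  ultimately show ?thesis unfolding I_b_def by blast
qed

lemma dc_semigroup_I_b_mult_closed: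
  assumes "2 < b" and G: "dc_semigroup b G" and "0 < k" and "0 < l"
    and A: "I_b b i k \<subseteq> G" and B: "I_b b j l \<subseteq> G"
  shows "I_b b (i + j) (k + l) \<subseteq> G"
proof -
  have "1 < b" and "0 < b" using \<open>2 < b\<close> by simp_all
  have blocks: "I_b b m 1 \<subseteq> G" if m: "i + j \<le> m" "m < i + j + (k + l)" for m
  proof (cases "Suc m < i + j + (k + l)")
    case True
    \<comment> \<open>split \<open>m = m1 + (m - m1)\<close> with \<open>i \<le> m1 < i + k\<close> and \<open>j \<le> m - m1 < j + l\<close>\<close>
    define m1 where "m1 = min (m - j) (i + k - 1)"
    have "b ^ m1 \<in> I_b b i k"
      using m \<open>0 < k\<close> by (intro power_in_I_b[OF \<open>1 < b\<close>]) (auto simp: m1_def)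
    moreover have "b ^ (m - m1) \<in> I_b b j l"
      using m True \<open>0 < k\<close> \<open>0 < l\<close> by (intro power_in_I_b[OF \<open>1 < b\<close>]) (auto simp: m1_def min_def)
    ultimately have "b ^ m1 * b ^ (m - m1) \<in> G"
      using A B by (intro dc_semigroup_mult[OF G]) auto
    moreover have "b ^ m1 * b ^ (m - m1) = b ^ m"
      using m by (simp add: m1_def flip: power_add)
    ultimately have "b ^ m \<in> G" by simp
    then show ?thesis
      by (rule dc_semigroup_block[OF G]) (simp add: power_in_I_b[OF \<open>1 < b\<close>])
  next
    case False
    define n where "n = i + k - 1 + (j + l - 1)"
    have "(b - 1) * b ^ (i + k - 1) \<in> G"
      using A top_digit_in_I_b[OF \<open>1 < b\<close> \<open>0 < k\<close>] by blast
    moreover have "(b - 1) * b ^ (j + l - 1) \<in> G"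
      using B top_digit_in_I_b[OF \<open>1 < b\<close> \<open>0 < l\<close>] by blast
    ultimately have "(b - 1) * b ^ (i + k - 1) * ((b - 1) * b ^ (j + l - 1)) \<in> G"
      by (rule dc_semigroup_mult[OF G])
    also have "(b - 1) * b ^ (i + k - 1) * ((b - 1) * b ^ (j + l - 1))
        = (b - 1) * (b - 1) * b ^ n"
      by (simp add: n_def power_add ac_simps)
    finally have "(b - 1) * (b - 1) * b ^ n \<in> G" .
    from dc_semigroup_block[OF G this pred_square_times_power_in_block[OF \<open>2 < b\<close>]]
    have "I_b b (Suc n) 1 \<subseteq> G" .
    moreover have "m = Suc n" using m False \<open>0 < k\<close> \<open>0 < l\<close> by (simp add: n_def)
    ultimately show ?thesis by simp
  qed
  then show ?thesis
    unfolding I_b_eq_UN_blocks[of b "i + j" "k + l", OF \<open>0 < b\<close>] by fastforce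
qed

theorem lemma2p1:
  fixes b :: nat and G :: "nat set"
  assumes "b > 2" and "dc_semigroup b G"
  shows "(\<exists>op :: nat set \<Rightarrow> nat set \<Rightarrow> nat set.
            (\<forall>i k j l. 0 < k \<longrightarrow> 0 < l \<longrightarrow>
               op (I_b b i k) (I_b b j l) = I_b b (i + j) (k + l)) \<and>
            (\<forall>A\<in>U_b b. \<forall>B\<in>U_b b. op A B \<in> U_b b) \<and>
            (\<forall>A\<in>U_b b. \<forall>B\<in>U_b b. \<forall>C\<in>U_b b. op (op A B) C = op A (op B C)) \<and>
            (\<forall>A\<in>U_b b. \<forall>B\<in>U_b b. op A B = op B A))
       \<and> (\<forall>i j k l. 0 < k \<longrightarrow> 0 < l \<longrightarrow> I_b b i k \<subseteq> G \<longrightarrow> I_b b j l \<subseteq> G \<longrightarrow>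
               I_b b (i + j) (k + l) \<subseteq> G)"
proof (intro conjI exI[of _ "interval_mult b"] allI impI ballI)
  fix i k j l :: nat
  assume "0 < k" "0 < l"
  then show "interval_mult b (I_b b i k) (I_b b j l) = I_b b (i + j) (k + l)"
    using assms(1) by (intro interval_mult_I_b) simp_all
next
  fix A B assume "A \<in> U_b b" "B \<in> U_b b"
  then show "interval_mult b A B \<in> U_b b"
    using assms(1) by (intro interval_mult_closed) simp_all
next
  fix A B C assume "A \<in> U_b b" "B \<in> U_b b" "C \<in> U_b b"
  then show "interval_mult b (interval_mult b A B) C = interval_mult b A (interval_mult b B C)"
    using assms(1) by (intro interval_mult_assoc) simp_all
next
  fix A B assume "A \<in> U_b b" "B \<in> U_b b"
  then show "interval_mult b A B = interval_mult b B A"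
    using assms(1) by (intro interval_mult_commute) simp_all
next
  fix i j k l :: nat
  assume "0 < k" "0 < l" "I_b b i k \<subseteq> G" "I_b b j l \<subseteq> G"
  then show "I_b b (i + j) (k + l) \<subseteq> G"
    by (rule dc_semigroup_I_b_mult_closed[OF assms])
qed

end
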